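(* Let $C$ be a binary linear $[n,k]$ code with minimum distance $d(C)$ and covering radius $\rho(C)$, let $G$ be a generator matrix of $C$ with rows $\mathbf r_1,\dots,\mathbf r_k$, let $\mathbf x=(x_1,\dots,x_n)\in\mathbb F_2^n$ and $y_i=\mathbf x\cdot\mathbf r_i$. Let $C_i$ ($i=1,2,3$) be the code obtained by any of Constructions I–IV, namely: $C_1$ (when $\mathbf x\cdot\mathbf x=1$) and $C_3$ (when $\mathbf x\cdot\mathbf x=0$) generated by the matrix with first row $(1,0,x_1,\dots,x_n)$ and further rows $(y_i,y_i,\mathbf r_i)$, $1\le i\le k$; and $C_2$ (when $\mathbf x\cdot\mathbf x=0$) generated by the matrix with first row $(1,1,x_1,\dots,x_n)$ and further rows $(y_i,0,\mathbf r_i)$, $1\le i\le k$. Then \[ \min\{d(C),\mathrm{weight}(\mathbf x+C)+1\}\le d(C_i)\le \rho(C)+2 . \]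
   Context: $\mathrm{weight}(\mathbf x+C)$ denotes the minimum Hamming weight of a vector in the coset $\mathbf x+C$. The covering radius $\rho(C)$ is the maximum over $\mathbf u\in\mathbb F_2^n$ of the Hamming distance from $\mathbf u$ to $C$. Dot products are standard over $\mathbb F_2$. *)

theory Defs
  imports Main
begin

text \<open>Binary vectors of length n are represented as bool lists of length n
  (True = 1, False = 0). Addition over F_2 is componentwise xor.\<close>

definition zerov :: "nat \<Rightarrow> bool list" where
  "zerov n = replicate n False"

definition vadd :: "bool list \<Rightarrow> bool list \<Rightarrow> bool list" where
  "vadd u v = map2 (\<noteq>) u v"

definition wt :: "bool list \<Rightarrow> nat" where
  "wt v = length (filter id v)"

definition dotp :: "bool list \<Rightarrow> bool list \<Rightarrow> bool" where
  "dotp u v = odd (length (filter id (map2 (\<and>) u v)))"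

definition lin_comb :: "nat \<Rightarrow> bool list list \<Rightarrow> bool list \<Rightarrow> bool list" where
  "lin_comb n rs cs = foldr vadd (map snd (filter fst (zip cs rs))) (zerov n)"

definition span :: "nat \<Rightarrow> bool list list \<Rightarrow> bool list set" where
  "span n rs = {lin_comb n rs cs | cs. length cs = length rs}"

definition lin_indep :: "nat \<Rightarrow> bool list list \<Rightarrow> bool" where
  "lin_indep n rs \<longleftrightarrow> (\<forall>cs. length cs = length rs \<and> lin_comb n rs cs = zerov n \<longrightarrow> (\<forall>c\<in>set cs. \<not> c))"

definition gen_matrix :: "nat \<Rightarrow> nat \<Rightarrow> bool list list \<Rightarrow> bool" where
  "gen_matrix n k G \<longleftrightarrow> length G = k \<and> (\<forall>r\<in>set G. length r = n) \<and> lin_indep n G"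

definition min_dist :: "nat \<Rightarrow> bool list set \<Rightarrow> nat" where
  "min_dist n C = Min {wt c | c. c \<in> C \<and> c \<noteq> zerov n}"

definition coset_wt :: "bool list \<Rightarrow> bool list set \<Rightarrow> nat" where
  "coset_wt x C = Min {wt (vadd x c) | c. c \<in> C}"

definition cov_radius :: "nat \<Rightarrow> bool list set \<Rightarrow> nat" where
  "cov_radius n C = Max {Min {wt (vadd u c) | c. c \<in> C} | u. length u = n}"

definition constr13 :: "bool list list \<Rightarrow> bool list \<Rightarrow> bool list list" where
  "constr13 G x = (True # False # x) # map (\<lambda>r. dotp x r # dotp x r # r) G"

definition constr2 :: "bool list list \<Rightarrow> bool list \<Rightarrow> bool list list" where
  "constr2 G x = (True # True # x) # map (\<lambda>r. dotp x r # False # r) G"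

end

theory Submission
  imports Defs
begin

(* Both constructions append a prefix t to x and the prefix (x \<cdot> r\<^sub>i) w to each row r\<^sub>i, for
  words t, w of length 2 with t \<noteq> 0 and t \<noteq> w (C\<^sub>1, C\<^sub>3: t = 10, w = 11; C\<^sub>2: t = 11, w = 10).
  As c \<mapsto> ((x \<cdot> c) w, c) is linear, the new code consists of the words ((x \<cdot> c) w, c) and
  (t + (x \<cdot> c) w, x + c) for c \<in> C.  A nonzero word of the first kind has c \<noteq> 0, so weight
  \<ge> d(C); one of the second kind has a nonzero prefix, so weight \<ge> weight(x + C) + 1.  Taking x + c
  a coset leader gives a word of weight \<le> weight(x + C) + 2 \<le> \<rho>(C) + 2.  Neither the parity of
  x \<cdot> x nor the linear independence of the rows (nor k \<ge> 1) plays any role. *)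

lemma length_zerov [simp]: "length (zerov m) = m"
  by (simp add: zerov_def)

lemma zerov_add: "zerov (m + n) = zerov m @ zerov n"
  by (simp add: zerov_def replicate_add)

lemma length_vadd [simp]: "length (vadd u v) = min (length u) (length v)"
  by (simp add: vadd_def)

lemma vadd_Cons: "vadd (a # u) (b # v) = (a \<noteq> b) # vadd u v"
  by (simp add: vadd_def)

lemma vadd_append: "length u = length u' \<Longrightarrow> vadd (u @ v) (u' @ v') = vadd u u' @ vadd v v'"
  by (simp add: vadd_def)

lemma vadd_self: "vadd u u = zerov (length u)"
  by (induction u) (simp_all add: vadd_def zerov_def)

lemma vadd_zerov_right: "length u = m \<Longrightarrow> vadd u (zerov m) = u"
  by (induction u arbitrary: m) (auto simp: vadd_def zerov_def)

lemma vadd_zerov_left: "length u = m \<Longrightarrow> vadd (zerov m) u = u"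
  by (induction u arbitrary: m) (auto simp: vadd_def zerov_def)

lemma wt_append: "wt (u @ v) = wt u + wt v"
  by (simp add: wt_def)

lemma wt_le_length: "wt v \<le> length v"
  by (simp add: wt_def)

lemma wt_zerov: "wt (zerov m) = 0"
  by (simp add: wt_def zerov_def)

lemma dotp_Cons: "dotp (a # x) (b # u) = ((a \<and> b) \<noteq> dotp x u)"
  by (cases a; cases b) (simp_all add: dotp_def)

lemma dotp_vadd:
  "length u = length x \<Longrightarrow> length v = length x \<Longrightarrow> dotp x (vadd u v) = (dotp x u \<noteq> dotp x v)"
proof (induction x arbitrary: u v)
  case Nil
  then show ?case by (simp add: dotp_def vadd_def)
next
  case (Cons a x)
  then show ?case by (cases u; cases v) (auto simp: vadd_Cons dotp_Cons)
qed

lemma dotp_zerov: "\<not> dotp x (zerov m)"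
proof (induction x arbitrary: m)
  case (Cons a x)
  then show ?case by (cases m) (simp_all add: dotp_def zerov_def dotp_Cons)
qed (simp add: dotp_def)

definition bscale :: "bool \<Rightarrow> bool list \<Rightarrow> bool list" where
  "bscale a w = (if a then w else zerov (length w))"

lemma length_bscale [simp]: "length (bscale a w) = length w"
  by (simp add: bscale_def)

lemma bscale_xor: "bscale (a \<noteq> b) w = vadd (bscale a w) (bscale b w)"
  by (simp add: bscale_def vadd_self vadd_zerov_left vadd_zerov_right)

lemma lin_comb_Cons:
  "lin_comb m (r # rs) (c # cs) = (if c then vadd r (lin_comb m rs cs) else lin_comb m rs cs)"
  by (simp add: lin_comb_def)

lemma lin_comb_no_coeffs [simp]: "lin_comb m rs [] = zerov m"
  by (simp add: lin_comb_def)

lemma lin_comb_no_rows [simp]: "lin_comb m [] cs = zerov m"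
  by (simp add: lin_comb_def)

lemma length_lin_comb: "\<forall>r\<in>set rs. length r = m \<Longrightarrow> length (lin_comb m rs cs) = m"
proof (induction rs arbitrary: cs)
  case (Cons r rs)
  then show ?case by (cases cs) (simp_all add: lin_comb_Cons)
qed simp

lemma lin_comb_map_linear:
  assumes rows: "\<forall>r\<in>set rs. length r = n"
    and add: "\<And>u v. length u = n \<Longrightarrow> length v = n \<Longrightarrow> f (vadd u v) = vadd (f u) (f v)"
    and zero: "f (zerov n) = zerov m"
  shows "lin_comb m (map f rs) cs = f (lin_comb n rs cs)"
  using rows
proof (induction rs arbitrary: cs)
  case (Cons r rs)
  then show ?case
    by (cases cs) (simp_all add: zero lin_comb_Cons add length_lin_comb)
qed (simp add: zero)

lemma lin_comb_in_span: "length cs = length rs \<Longrightarrow> lin_comb m rs cs \<in> span m rs"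
  by (auto simp: span_def)

lemma span_Cons: "span m (r # rs) = span m rs \<union> vadd r ` span m rs"
proof (intro equalityI subsetI)
  fix v assume "v \<in> span m (r # rs)"
  then obtain a cs where "length cs = length rs" "v = lin_comb m (r # rs) (a # cs)"
    unfolding span_def by (auto simp: length_Suc_conv)
  moreover have "lin_comb m rs cs \<in> span m rs"
    using \<open>length cs = length rs\<close> by (rule lin_comb_in_span)
  ultimately show "v \<in> span m rs \<union> vadd r ` span m rs"
    by (cases a) (simp_all add: lin_comb_Cons)
next
  fix v assume "v \<in> span m rs \<union> vadd r ` span m rs"
  then consider cs where "length cs = length rs" "v = lin_comb m rs cs"
    | cs where "length cs = length rs" "v = vadd r (lin_comb m rs cs)"
    unfolding span_def by blast
  then show "v \<in> span m (r # rs)"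
    by cases (metis lin_comb_Cons lin_comb_in_span length_Cons)+
qed

lemma span_map_linear:
  assumes "\<forall>r\<in>set rs. length r = n"
    and "\<And>u v. length u = n \<Longrightarrow> length v = n \<Longrightarrow> f (vadd u v) = vadd (f u) (f v)"
    and "f (zerov n) = zerov m"
  shows "span m (map f rs) = f ` span n rs"
proof -
  have "lin_comb m (map f rs) cs = f (lin_comb n rs cs)" for cs
    by (rule lin_comb_map_linear[OF assms])
  then show ?thesis
    unfolding span_def by (simp add: image_Collect) blast
qed

lemma length_span: "\<forall>r\<in>set rs. length r = n \<Longrightarrow> \<forall>c\<in>span n rs. length c = n"
  by (auto simp: span_def length_lin_comb)

lemma zerov_in_span: "zerov n \<in> span n rs"
proof -
  have "lin_comb n rs (replicate (length rs) False) = zerov n"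
    by (induction rs) (simp_all add: lin_comb_Cons)
  then show ?thesis
    using lin_comb_in_span[of "replicate (length rs) False" rs n] by simp
qed

lemma finite_nonzero_weights:
  "\<forall>v\<in>D. length v = l \<Longrightarrow> finite {wt v | v. v \<in> D \<and> v \<noteq> zerov l}"
  by (rule finite_subset[of _ "{..l}"]) (auto intro: le_trans[OF wt_le_length])

lemma min_dist_le:
  "\<forall>v\<in>D. length v = l \<Longrightarrow> v \<in> D \<Longrightarrow> v \<noteq> zerov l \<Longrightarrow> min_dist l D \<le> wt v"
  unfolding min_dist_def by (rule Min_le[OF finite_nonzero_weights]) auto

lemma le_min_dist:
  assumes "\<forall>v\<in>D. length v = l" "v \<in> D" "v \<noteq> zerov l"
    and "\<And>v. v \<in> D \<Longrightarrow> v \<noteq> zerov l \<Longrightarrow> L \<le> wt v"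
  shows "L \<le> min_dist l D"
  unfolding min_dist_def using assms finite_nonzero_weights[OF assms(1)]
  by (subst Min_ge_iff) auto

lemma finite_coset_weights: "finite {wt (vadd x c) | c. c \<in> C}"
  by (rule finite_subset[of _ "{..length x}"]) (auto intro: le_trans[OF wt_le_length])

lemma coset_wt_le: "c \<in> C \<Longrightarrow> coset_wt x C \<le> wt (vadd x c)"
  unfolding coset_wt_def by (rule Min_le[OF finite_coset_weights]) auto

lemma coset_wt_attained:
  assumes "C \<noteq> {}"
  obtains c where "c \<in> C" "wt (vadd x c) = coset_wt x C"
proof -
  have "coset_wt x C \<in> {wt (vadd x c) | c. c \<in> C}"
    unfolding coset_wt_def using assms by (intro Min_in[OF finite_coset_weights]) auto
  then show ?thesis using that by force
qed

lemma coset_wt_le_cov_radius: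
  assumes "C \<noteq> {}" "length x = n"
  shows "coset_wt x C \<le> cov_radius n C"
proof -
  let ?T = "{coset_wt u C | u. length u = n}"
  have "?T \<subseteq> {..n}"
  proof
    fix t assume "t \<in> ?T"
    then obtain u where u: "length u = n" "t = coset_wt u C"
      by blast
    obtain c where "c \<in> C" using assms(1) by blast
    then have "coset_wt u C \<le> wt (vadd u c)" by (rule coset_wt_le)
    also have "\<dots> \<le> n" using wt_le_length[of "vadd u c"] u(1) by simp
    finally show "t \<in> {..n}" using u(2) by simp
  qed
  then have "coset_wt x C \<le> Max ?T"
    using assms(2) by (intro Max_ge) (auto intro: finite_subset)
  then show ?thesis
    by (simp add: cov_radius_def coset_wt_def)
qed

lemma min_dist_prefixed_cosets:
  fixes P Q :: "bool list \<Rightarrow> bool list"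
  assumes C: "\<forall>c\<in>C. length c = n" "zerov n \<in> C" and x: "length x = n"
    and P: "\<forall>c\<in>C. length (P c) = m" "P (zerov n) = zerov m"
    and Q: "\<forall>c\<in>C. length (Q c) = m \<and> 0 < wt (Q c)"
    and D: "D = (\<lambda>c. P c @ c) ` C \<union> (\<lambda>c. Q c @ vadd x c) ` C"
  shows "min (min_dist n C) (coset_wt x C + 1) \<le> min_dist (m + n) D"
    and "min_dist (m + n) D \<le> coset_wt x C + m"
proof -
  have len: "\<forall>v\<in>D. length v = m + n"
    using C(1) P(1) Q x D by auto
  obtain c0 where c0: "c0 \<in> C" "wt (vadd x c0) = coset_wt x C"
    using coset_wt_attained C(2) by blast
  let ?v0 = "Q c0 @ vadd x c0"
  have "0 < wt ?v0"
    using c0(1) Q by (simp add: wt_append)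
  then have v0: "?v0 \<in> D" "?v0 \<noteq> zerov (m + n)"
    using D c0(1) wt_zerov[of "m + n"] by auto
  have "min_dist (m + n) D \<le> wt ?v0"
    by (rule min_dist_le[OF len v0])
  also have "\<dots> \<le> m + coset_wt x C"
    using c0 Q wt_le_length[of "Q c0"] by (simp add: wt_append)
  finally show "min_dist (m + n) D \<le> coset_wt x C + m"
    by simp
  show "min (min_dist n C) (coset_wt x C + 1) \<le> min_dist (m + n) D"
  proof (rule le_min_dist[OF len v0])
    fix v assume v: "v \<in> D" "v \<noteq> zerov (m + n)"
    then consider c where "c \<in> C" "v = P c @ c" | c where "c \<in> C" "v = Q c @ vadd x c"
      using D by blast
    then show "min (min_dist n C) (coset_wt x C + 1) \<le> wt v"
    proof cases
      case 1
      then have "c \<noteq> zerov n"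
        using v(2) P(2) by (auto simp: zerov_add)
      then have "min_dist n C \<le> wt c"
        using min_dist_le C(1) 1(1) by blast
      then show ?thesis
        using 1(2) by (simp add: wt_append)
    next
      case 2
      then have "coset_wt x C \<le> wt (vadd x c)" "0 < wt (Q c)"
        using coset_wt_le Q by auto
      then show ?thesis
        using 2(2) by (simp add: wt_append)
    qed
  qed
qed

definition ext_generator :: "bool list \<Rightarrow> bool list \<Rightarrow> bool list \<Rightarrow> bool list list \<Rightarrow> bool list list" where
  "ext_generator t w x G = (t @ x) # map (\<lambda>r. bscale (dotp x r) w @ r) G"

lemma span_ext_generator:
  assumes G: "\<forall>r\<in>set G. length r = n" and x: "length x = n" and t: "length t = length w"
  shows "span (length w + n) (ext_generator t w x G)
    = (\<lambda>c. bscale (dotp x c) w @ c) ` span n G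
      \<union> (\<lambda>c. vadd t (bscale (dotp x c) w) @ vadd x c) ` span n G"
proof -
  let ?f = "\<lambda>c. bscale (dotp x c) w @ c"
  have "span (length w + n) (map ?f G) = ?f ` span n G"
  proof (rule span_map_linear[OF G])
    show "?f (vadd u v) = vadd (?f u) (?f v)" if "length u = n" "length v = n" for u v
      using that x bscale_xor[of "dotp x u" "dotp x v" w] by (simp add: dotp_vadd vadd_append)
    show "?f (zerov n) = zerov (length w + n)"
      by (simp add: dotp_zerov bscale_def zerov_add)
  qed
  moreover have "vadd (t @ x) (?f c) = vadd t (bscale (dotp x c) w) @ vadd x c" for c
    using t by (simp add: vadd_append)
  ultimately show ?thesis
    by (simp add: ext_generator_def span_Cons image_image)
qed

lemma min_dist_ext_generator:
  assumes G: "\<forall>r\<in>set G. length r = n" and x: "length x = n" and t: "length t = length w"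
    and t_nonzero: "0 < wt t" and t_ne_w: "0 < wt (vadd t w)"
  shows "min (min_dist n (span n G)) (coset_wt x (span n G) + 1)
           \<le> min_dist (length w + n) (span (length w + n) (ext_generator t w x G))"
    and "min_dist (length w + n) (span (length w + n) (ext_generator t w x G))
           \<le> coset_wt x (span n G) + length w"
proof -
  have "\<forall>c\<in>span n G. 0 < wt (vadd t (bscale (dotp x c) w))"
    using t_nonzero t_ne_w t by (simp add: bscale_def vadd_zerov_right)
  then show "min (min_dist n (span n G)) (coset_wt x (span n G) + 1)
           \<le> min_dist (length w + n) (span (length w + n) (ext_generator t w x G))"
    and "min_dist (length w + n) (span (length w + n) (ext_generator t w x G))
           \<le> coset_wt x (span n G) + length w"
    using min_dist_prefixed_cosets[OF length_span[OF G] zerov_in_span x _ _ _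
        span_ext_generator[OF G x t]] t
    by (simp_all add: dotp_zerov bscale_def)
qed

lemma constr13_eq_ext_generator: "constr13 G x = ext_generator [True, False] [True, True] x G"
  by (simp add: constr13_def ext_generator_def bscale_def zerov_def)

lemma constr2_eq_ext_generator: "constr2 G x = ext_generator [True, True] [True, False] x G"
  by (simp add: constr2_def ext_generator_def bscale_def zerov_def)

theorem corollary1:
  fixes n k :: nat and G :: "bool list list" and x :: "bool list"
  assumes "gen_matrix n k G" and "k \<ge> 1" and "length x = n"
  shows "(dotp x x \<longrightarrow>
            min (min_dist n (span n G)) (coset_wt x (span n G) + 1) \<le> min_dist (n+2) (span (n+2) (constr13 G x))
          \<and> min_dist (n+2) (span (n+2) (constr13 G x)) \<le> cov_radius n (span n G) + 2)
       \<and> (\<not> dotp x x \<longrightarrow>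
            min (min_dist n (span n G)) (coset_wt x (span n G) + 1) \<le> min_dist (n+2) (span (n+2) (constr13 G x))
          \<and> min_dist (n+2) (span (n+2) (constr13 G x)) \<le> cov_radius n (span n G) + 2)
       \<and> (\<not> dotp x x \<longrightarrow>
            min (min_dist n (span n G)) (coset_wt x (span n G) + 1) \<le> min_dist (n+2) (span (n+2) (constr2 G x))
          \<and> min_dist (n+2) (span (n+2) (constr2 G x)) \<le> cov_radius n (span n G) + 2)"
proof -
  let ?C = "span n G"
  have G: "\<forall>r\<in>set G. length r = n"
    using assms(1) by (simp add: gen_matrix_def)
  have cov: "coset_wt x ?C \<le> cov_radius n ?C"
    using coset_wt_le_cov_radius zerov_in_span assms(3) by blast
  have C13: "min (min_dist n ?C) (coset_wt x ?C + 1) \<le> min_dist (n+2) (span (n+2) (constr13 G x))"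
      "min_dist (n+2) (span (n+2) (constr13 G x)) \<le> coset_wt x ?C + 2"
    and C2: "min (min_dist n ?C) (coset_wt x ?C + 1) \<le> min_dist (n+2) (span (n+2) (constr2 G x))"
      "min_dist (n+2) (span (n+2) (constr2 G x)) \<le> coset_wt x ?C + 2"
    using min_dist_ext_generator[OF G assms(3), of "[True, False]" "[True, True]"]
      min_dist_ext_generator[OF G assms(3), of "[True, True]" "[True, False]"]
    by (simp_all add: constr13_eq_ext_generator constr2_eq_ext_generator wt_def vadd_def)
  show ?thesis
    using C13 C2 cov by auto
qed

end
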